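(* Let $K\subset\mathbb P^1$ be a compact set such that $\Omega=\mathbb P^1\setminus K$ admits a bounded injective holomorphic function. Let $p_1,\dots,p_m\in\Omega$ be distinct points and set $\Omega'=\Omega\setminus\{p_1,\dots,p_m\}$. Then for each $j=1,\dots,m$, $$\lim_{\Omega'\ni z\to p_j}S_{\Omega'}(z)=0.$$
   Context: Let $\triangle\subset\mathbb C$ be the unit disc and $B_r(p)$ the open disc of radius $r$ centred at $p$. For a domain $\Omega\subset\mathbb P^1$, $x\in\Omega$, and an injective holomorphic $\varphi:\Omega\to\triangle$ with $\varphi(x)=0$, set $S_{\Omega,\varphi}(x)=\sup\{r>0:B_r(0)\subset\varphi(\Omega)\}$; the squeezing function is $S_\Omega(x)=\sup_\varphi S_{\Omega,\varphi}(x)$ over all such $\varphi$. *)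

theory Defs
  imports "HOL-Analysis.Analysis"
begin

text \<open>The Riemann sphere P^1 is modelled as complex option:
  Some z is the finite point z and None is the point at infinity.\<close>

type_synonym riemann_sphere = "complex option"

definition p1_open :: "riemann_sphere set \<Rightarrow> bool" where
  "p1_open U \<longleftrightarrow> open {z. Some z \<in> U} \<and>
     (None \<in> U \<longrightarrow> (\<exists>R. \<forall>z. R < norm z \<longrightarrow> Some z \<in> U))"

lemma istopology_p1_open: "istopology p1_open"
  unfolding istopology_def
proof (intro conjI allI impI ballI)
  fix S T assume S: "p1_open S" and T: "p1_open T"
  have "{z. Some z \<in> S \<inter> T} = {z. Some z \<in> S} \<inter> {z. Some z \<in> T}" by auto
  moreover have "None \<in> S \<inter> T \<longrightarrow> (\<exists>R. \<forall>z. R < norm z \<longrightarrow> Some z \<in> S \<inter> T)"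
  proof
    assume "None \<in> S \<inter> T"
    then obtain R1 R2 where "\<forall>z. R1 < norm z \<longrightarrow> Some z \<in> S" "\<forall>z. R2 < norm z \<longrightarrow> Some z \<in> T"
      using S T unfolding p1_open_def by blast
    then show "\<exists>R. \<forall>z. R < norm z \<longrightarrow> Some z \<in> S \<inter> T"
      by (intro exI[of _ "max R1 R2"]) auto
  qed
  ultimately show "p1_open (S \<inter> T)"
    using S T unfolding p1_open_def by (auto intro: open_Int)
next
  fix \<K> assume K: "\<forall>K\<in>\<K>. p1_open K"
  have "{z. Some z \<in> \<Union>\<K>} = (\<Union>K\<in>\<K>. {z. Some z \<in> K})" by auto
  moreover have "open (\<Union>K\<in>\<K>. {z. Some z \<in> K})"
    using K unfolding p1_open_def by auto
  moreover have "None \<in> \<Union>\<K> \<longrightarrow> (\<exists>R. \<forall>z. R < norm z \<longrightarrow> Some z \<in> \<Union>\<K>)"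
    using K unfolding p1_open_def by blast
  ultimately show "p1_open (\<Union>\<K>)" unfolding p1_open_def by simp
qed

definition p1_top :: "riemann_sphere topology" where
  "p1_top = topology p1_open"

lemma openin_p1_top: "openin p1_top U \<longleftrightarrow> p1_open U"
  unfolding p1_top_def using istopology_p1_open by simp

definition p1_holomorphic_on :: "(riemann_sphere \<Rightarrow> complex) \<Rightarrow> riemann_sphere set \<Rightarrow> bool" where
  "p1_holomorphic_on f \<Omega> \<longleftrightarrow>
     (\<lambda>z. f (Some z)) holomorphic_on {z. Some z \<in> \<Omega>} \<and>
     (None \<in> \<Omega> \<longrightarrow>
        (\<lambda>w. f (if w = 0 then None else Some (1 / w))) holomorphic_on
          {w. (if w = 0 then None else Some (1 / w)) \<in> \<Omega>})"

definition squeezing_function :: "riemann_sphere set \<Rightarrow> riemann_sphere \<Rightarrow> real" where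
  "squeezing_function \<Omega> x =
     (SUP \<phi> \<in> {\<phi>. p1_holomorphic_on \<phi> \<Omega> \<and> inj_on \<phi> \<Omega> \<and> \<phi> ` \<Omega> \<subseteq> ball 0 1 \<and> \<phi> x = 0}.
        Sup {r. 0 < r \<and> ball 0 r \<subseteq> \<phi> ` \<Omega>})"

end

theory Submission
  imports Defs "HOL-Complex_Analysis.Complex_Analysis"
begin

text \<open>Let \<open>\<phi>\<close> be an injective holomorphic map of \<open>\<Omega>' = \<Omega> - P\<close> into the unit disc with
  \<open>\<phi>(z) = 0\<close>, where \<open>z\<close> lies in a punctured disc of radius \<open>R\<close> around \<open>p \<in> P\<close>, at
  distance \<open>|w|\<close> from \<open>p\<close> in a local coordinate. By Riemann's removable singularity theorem \<open>\<phi>\<close>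
  extends holomorphically to \<open>p\<close>, with value \<open>a\<close> of modulus at most 1, and the Cauchy estimate
  gives \<open>|a| = |a - \<phi>(z)| \<le> 2|w|/R\<close>. The value \<open>a\<close> is not taken by \<open>\<phi>\<close> on \<open>\<Omega>'\<close>: if
  \<open>a = \<phi>(y)\<close>, then by the open mapping theorem the values of \<open>\<phi>\<close> near \<open>p\<close> would also be taken
  near \<open>y\<close>, contradicting injectivity. So no disc around 0 of radius larger than \<open>2|w|/R\<close> lies in
  \<open>\<phi>(\<Omega>')\<close>, and the squeezing function is at most \<open>2|w|/R\<close> near \<open>p\<close>. The bounded injective
  function on \<open>\<Omega>\<close> is needed only to make the family of maps nonempty.\<close>

definition chart :: "riemann_sphere \<Rightarrow> complex \<Rightarrow> riemann_sphere" where
  "chart q w = (case q of Some b \<Rightarrow> Some (b + w) | None \<Rightarrow> (if w = 0 then None else Some (1/w)))"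

lemma chart_0 [simp]: "chart q 0 = q"
  by (cases q) (auto simp: chart_def)

lemma inj_chart: "inj (chart q)"
  by (cases q) (auto simp: chart_def inj_def split: if_splits)

lemma p1_open_chart_image:
  assumes "e > 0"
  shows "p1_open (chart q ` ball 0 e)"
proof (cases q)
  case None
  have eq: "{z. Some z \<in> chart q ` ball 0 e} = {z. 1/e < norm z}"
  proof (intro set_eqI iffI)
    fix z assume "z \<in> {z. Some z \<in> chart q ` ball 0 e}"
    then obtain w where w: "norm w < e" "w \<noteq> 0" "z = 1/w"
      using None by (auto simp: chart_def split: if_splits)
    then have "1/e < 1 / norm w" using assms by (intro divide_strict_left_mono) auto
    then show "z \<in> {z. 1/e < norm z}" using w by (simp add: norm_divide)
  next
    fix z :: complex assume "z \<in> {z. 1/e < norm z}"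
    then have z: "1/e < norm z" "z \<noteq> 0" using assms by (auto simp: field_simps)
    then have "norm (1/z) < e" using assms by (auto simp: norm_divide field_simps)
    moreover have "chart q (1/z) = Some z" using None z by (simp add: chart_def)
    ultimately show "z \<in> {z. Some z \<in> chart q ` ball 0 e}" by (metis image_eqI mem_ball_0 mem_Collect_eq)
  qed
  have "open {z::complex. 1/e < norm z}"
    by (intro open_Collect_less continuous_intros)
  then show ?thesis unfolding p1_open_def eq using eq by blast
next
  case (Some b)
  have "{z. Some z \<in> chart q ` ball 0 e} = ball b e"
  proof (intro set_eqI iffI)
    fix z assume "z \<in> ball b e"
    then have "chart q (z - b) = Some z" "z - b \<in> ball 0 e"
      using Some by (auto simp: chart_def dist_norm norm_minus_commute)
    then show "z \<in> {z. Some z \<in> chart q ` ball 0 e}" by (metis image_eqI mem_Collect_eq)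
  qed (use Some in \<open>auto simp: chart_def dist_norm\<close>)
  moreover have "None \<notin> chart q ` ball 0 e" using Some by (auto simp: chart_def)
  ultimately show ?thesis unfolding p1_open_def by auto
qed

lemma p1_open_contains_chart_image:
  assumes "p1_open U" "q \<in> U"
  obtains e where "e > 0" "chart q ` ball 0 e \<subseteq> U"
proof (cases q)
  case None
  then obtain R where R: "\<forall>z. R < norm z \<longrightarrow> Some z \<in> U" using assms unfolding p1_open_def by auto
  have "chart q w \<in> U" if "norm w < 1 / max R 1" for w
  proof (cases "w = 0")
    case False
    have "norm w * max R 1 < 1" using that by (simp add: pos_less_divide_eq)
    then have "max R 1 < 1 / norm w" using False by (metis mult.commute pos_less_divide_eq zero_less_norm_iff)
    then show ?thesis using R False None by (simp add: chart_def norm_divide)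
  qed (use assms in simp)
  then show ?thesis by (intro that[of "1 / max R 1"]) auto
next
  case (Some b)
  then have "open {z. Some z \<in> U}" "b \<in> {z. Some z \<in> U}" using assms by (auto simp: p1_open_def)
  then obtain e where "e > 0" "ball b e \<subseteq> {z. Some z \<in> U}" using open_contains_ball by blast
  then show ?thesis using Some by (intro that[of e]) (auto simp: chart_def dist_norm subset_iff)
qed

lemma chart_images_disjoint:
  assumes "q \<noteq> y"
  obtains e where "e > 0" "\<And>u v. norm u < e \<Longrightarrow> norm v < e \<Longrightarrow> chart q u \<noteq> chart y v"
proof -
  have finite_vs_infinity: "\<exists>e>0. \<forall>u v. norm u < e \<longrightarrow> norm v < e \<longrightarrow> chart (Some a) u \<noteq> chart None v" for a
  proof (intro exI[of _ "1 / (norm a + 1)"] conjI allI impI)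
    have pos: "0 < norm a + 1" using norm_ge_zero[of a] by linarith
    then show "0 < 1 / (norm a + 1)" by simp
    fix u v :: complex assume u: "norm u < 1 / (norm a + 1)" and v: "norm v < 1 / (norm a + 1)"
    have "1 / (norm a + 1) \<le> 1" using pos by (simp add: divide_le_eq)
    then have "norm (a + u) < norm a + 1" using u norm_triangle_ineq[of a u] by linarith
    moreover have "norm a + 1 < norm (1/v)" if "v \<noteq> 0"
    proof -
      have "norm v * (norm a + 1) < 1" using v pos by (simp add: pos_less_divide_eq)
      then show ?thesis using that by (simp add: norm_divide pos_less_divide_eq mult.commute)
    qed
    ultimately show "chart (Some a) u \<noteq> chart None v" by (auto simp: chart_def)
  qed
  have "\<exists>e>0. \<forall>u v. norm u < e \<longrightarrow> norm v < e \<longrightarrow> chart q u \<noteq> chart y v"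
  proof (cases q; cases y)
    fix a b assume ab: "q = Some a" "y = Some b"
    show ?thesis
    proof (intro exI[of _ "norm (a - b) / 2"] conjI allI impI)
      show "0 < norm (a - b) / 2" using ab assms by simp
      fix u v :: complex assume "norm u < norm (a - b) / 2" "norm v < norm (a - b) / 2"
      moreover have "norm (a - b) \<le> norm v + norm u" if "a + u = b + v"
      proof -
        have "a - b = v - u" using that by (simp add: algebra_simps)
        then show ?thesis by (metis norm_triangle_ineq4)
      qed
      ultimately show "chart q u \<noteq> chart y v" using ab by (auto simp: chart_def)
    qed
  qed (use assms finite_vs_infinity in metis)+
  then show ?thesis using that by blast
qed

lemma Hausdorff_p1_top: "Hausdorff_space p1_top"
  unfolding Hausdorff_space_def
proof (intro allI impI)
  fix x y assume "x \<in> topspace p1_top \<and> y \<in> topspace p1_top \<and> x \<noteq> y"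
  then obtain e where e: "e > 0" "\<And>u v. norm u < e \<Longrightarrow> norm v < e \<Longrightarrow> chart x u \<noteq> chart y v"
    using chart_images_disjoint by blast
  show "\<exists>U V. openin p1_top U \<and> openin p1_top V \<and> x \<in> U \<and> y \<in> V \<and> disjnt U V"
  proof (intro exI conjI)
    show "openin p1_top (chart x ` ball 0 e)" "openin p1_top (chart y ` ball 0 e)"
      using p1_open_chart_image[OF e(1)] by (auto simp: openin_p1_top)
    show "x \<in> chart x ` ball 0 e" "y \<in> chart y ` ball 0 e"
      using e(1) by (metis chart_0 centre_in_ball image_eqI)+
    show "disjnt (chart x ` ball 0 e) (chart y ` ball 0 e)"
      using e(2) by (auto simp: disjnt_def)
  qed
qed

lemma p1_open_Diff_compact_finite:
  assumes "compactin p1_top K" "finite Q"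
  shows "p1_open (UNIV - K - Q)"
proof -
  have "openin p1_top UNIV" by (simp add: openin_p1_top p1_open_def)
  then have top: "topspace p1_top = UNIV" using openin_subset by blast
  have "compactin p1_top (K \<union> Q)"
    using assms by (intro compactin_Un[OF assms(1) finite_imp_compactin]) (auto simp: top)
  then have "closedin p1_top (K \<union> Q)" by (rule compactin_imp_closedin[OF Hausdorff_p1_top])
  then show ?thesis by (simp add: closedin_def top openin_p1_top Diff_Un Diff_eq)
qed

lemma p1_holomorphic_on_subset:
  assumes "p1_holomorphic_on f S" "T \<subseteq> S"
  shows "p1_holomorphic_on f T"
  using assms unfolding p1_holomorphic_on_def
  by (blast intro: holomorphic_on_subset)

lemma holomorphic_on_chart_comp:
  assumes hol: "p1_holomorphic_on \<phi> \<Omega>" and S: "chart q ` S \<subseteq> \<Omega>"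
  shows "(\<phi> \<circ> chart q) holomorphic_on S"
proof (cases q)
  case (Some b)
  have "((\<lambda>z. \<phi> (Some z)) \<circ> (\<lambda>w. b + w)) holomorphic_on S"
    using hol S Some unfolding p1_holomorphic_on_def
    by (intro holomorphic_on_compose_gen[where t = "{z. Some z \<in> \<Omega>}"])
       (auto intro!: holomorphic_intros simp: chart_def)
  then show ?thesis using Some by (simp add: chart_def o_def)
next
  case None
  show ?thesis
  proof (cases "None \<in> \<Omega>")
    case True
    have "S \<subseteq> {w. (if w = 0 then None else Some (1 / w)) \<in> \<Omega>}"
      using S None by (auto simp: chart_def)
    then have "(\<lambda>w. \<phi> (if w = 0 then None else Some (1 / w))) holomorphic_on S"
      using hol True by (auto simp: p1_holomorphic_on_def intro: holomorphic_on_subset)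
    then show ?thesis using None by (simp add: chart_def o_def)
  next
    case False
    then have S0: "0 \<notin> S" using S None by (metis chart_0 image_eqI subsetD)
    have "((\<lambda>z. \<phi> (Some z)) \<circ> (\<lambda>w. 1 / w)) holomorphic_on S"
      using hol S None S0 unfolding p1_holomorphic_on_def
      by (intro holomorphic_on_compose_gen[where t = "{z. Some z \<in> \<Omega>}"])
         (auto intro!: holomorphic_intros simp: chart_def split: if_splits)
    then show ?thesis
      by (rule holomorphic_transform) (use S0 None in \<open>auto simp: chart_def\<close>)
  qed
qed

lemma open_image_chart_comp:
  assumes "p1_holomorphic_on \<phi> \<Omega>" "inj_on \<phi> \<Omega>" "chart q ` ball 0 e \<subseteq> \<Omega>"
  shows "open ((\<phi> \<circ> chart q) ` ball 0 e)"
proof (rule open_mapping_thm3)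
  show "(\<phi> \<circ> chart q) holomorphic_on ball 0 e"
    using assms by (intro holomorphic_on_chart_comp) auto
  show "inj_on (\<phi> \<circ> chart q) (ball 0 e)"
    using assms inj_chart by (intro comp_inj_on) (auto intro: inj_on_subset)
qed simp

lemma removable_singularity_norm_le:
  fixes g :: "complex \<Rightarrow> complex"
  assumes "g holomorphic_on ball c R - {c}" and bd: "\<And>u. u \<in> ball c R - {c} \<Longrightarrow> norm (g u) \<le> B"
  obtains G where "G holomorphic_on ball c R" "\<And>u. u \<in> ball c R - {c} \<Longrightarrow> G u = g u"
    "\<And>u. u \<in> ball c R \<Longrightarrow> norm (G u) \<le> B"
proof (cases "R > 0")
  case R: True
  have near_c: "eventually (\<lambda>z. z \<in> ball c R - {c}) (at c)"
    using R by (intro eventually_at_in_open) auto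
  then have "eventually (\<lambda>z. norm (g z) \<le> B) (at c)"
    by (rule eventually_mono) (rule bd)
  then obtain G where G: "G holomorphic_on ball c R" "\<And>u. u \<in> ball c R - {c} \<Longrightarrow> G u = g u"
    using holomorphic_on_extend_bounded[of g "ball c R" c] assms(1) R by auto
  have "isCont G c"
    using G(1) R by (intro continuous_on_interior[OF holomorphic_on_imp_continuous_on]) auto
  moreover have "eventually (\<lambda>z. norm (G z) \<le> B) (at c)"
    using near_c by (rule eventually_mono) (simp add: G(2) bd)
  ultimately have "norm (G c) \<le> B"
    by (intro Lim_norm_ubound[of "at c" G]) (auto simp: isCont_def)
  then have "norm (G u) \<le> B" if "u \<in> ball c R" for u
    using that G(2) bd by (cases "u = c") auto
  then show ?thesis using G by (intro that[of G])
qed (rule that[of g], auto simp: ball_empty holomorphic_on_empty)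

lemma holomorphic_bounded_Lipschitz_on_half_ball:
  fixes G :: "complex \<Rightarrow> complex"
  assumes hol: "G holomorphic_on ball c R" and bd: "\<And>u. u \<in> ball c R \<Longrightarrow> norm (G u) \<le> B"
    and w: "w \<in> ball c (R/2)"
  shows "norm (G w - G c) \<le> 2 * B / R * norm (w - c)"
proof (rule field_differentiable_bound[of "ball c (R/2)" G "deriv G"])
  show "c \<in> ball c (R/2)"
    using w zero_le_dist[of c w] unfolding centre_in_ball mem_ball by linarith
next
  fix z assume z: "z \<in> ball c (R/2)"
  have zR: "z \<in> ball c R" using z zero_le_dist[of c z] unfolding mem_ball by linarith
  have sub: "cball z (R/2) \<subseteq> ball c R"
  proof
    fix x assume "x \<in> cball z (R/2)"
    then show "x \<in> ball c R" using z dist_triangle[of c x z] by simp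
  qed
  then show "(G has_field_derivative deriv G z) (at z within ball c (R/2))"
    using hol zR by (intro holomorphic_derivI[of G "ball c R"]) auto
  have "norm ((deriv ^^ 1) G z) \<le> fact 1 * B / (R/2) ^ 1"
  proof (rule Cauchy_inequality)
    show "G holomorphic_on ball z (R/2)" "continuous_on (cball z (R/2)) G"
      using hol sub ball_subset_cball
      by (blast intro: holomorphic_on_subset continuous_on_subset holomorphic_on_imp_continuous_on)+
    show "0 < R/2" using w zero_le_dist[of c w] unfolding mem_ball by linarith
  qed (use sub bd in \<open>auto simp: dist_norm\<close>)
  then show "norm (deriv G z) \<le> 2 * B / R" by (simp add: mult.commute)
qed (use w in auto)

lemma extension_value_not_in_image:
  assumes op: "p1_open \<Omega>" and hol: "p1_holomorphic_on \<phi> \<Omega>" and inj: "inj_on \<phi> \<Omega>"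
    and "p \<notin> \<Omega>" and "R > 0" and punct: "chart p ` (ball 0 R - {0}) \<subseteq> \<Omega>"
    and G: "isCont G 0" "\<And>u. u \<in> ball 0 R - {0} \<Longrightarrow> G u = \<phi> (chart p u)"
  shows "G 0 \<notin> \<phi> ` \<Omega>"
proof
  assume "G 0 \<in> \<phi> ` \<Omega>"
  then obtain y where y: "y \<in> \<Omega>" "\<phi> y = G 0" by auto
  with \<open>p \<notin> \<Omega>\<close> have "p \<noteq> y" by blast
  then obtain e where e: "e > 0" "\<And>u v. norm u < e \<Longrightarrow> norm v < e \<Longrightarrow> chart p u \<noteq> chart y v"
    using chart_images_disjoint by blast
  obtain \<eta> where \<eta>: "\<eta> > 0" "chart y ` ball 0 \<eta> \<subseteq> \<Omega>"
    using p1_open_contains_chart_image[OF op y(1)] .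
  define V where "V = (\<phi> \<circ> chart y) ` ball 0 (min \<eta> e)"
  have "open V" unfolding V_def using \<eta> by (intro open_image_chart_comp[OF hol inj]) auto
  moreover have "G 0 \<in> V" using y e \<eta> by (auto simp: V_def intro!: image_eqI[of _ _ 0])
  ultimately have "eventually (\<lambda>s. G s \<in> V) (at 0)"
    using G(1) by (intro topological_tendstoD) (auto simp: isCont_def)
  moreover have "eventually (\<lambda>s. s \<in> ball 0 (min e R) - {0}) (at 0)"
    using e \<open>R > 0\<close> by (intro eventually_at_in_open) auto
  ultimately obtain s where s: "G s \<in> V" "s \<in> ball 0 (min e R) - {0}"
    using eventually_happens'[OF at_neq_bot] eventually_conj by blast
  then obtain t where t: "norm t < min \<eta> e" "G s = \<phi> (chart y t)" by (auto simp: V_def)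
  have "\<phi> (chart p s) = \<phi> (chart y t)" using G(2) s t by auto
  moreover have "chart p s \<in> \<Omega>" "chart y t \<in> \<Omega>" using punct \<eta> s t by auto
  ultimately have "chart p s = chart y t" using inj by (auto dest: inj_onD)
  then show False using e s t by auto
qed

definition squeezing_maps :: "riemann_sphere set \<Rightarrow> riemann_sphere \<Rightarrow> (riemann_sphere \<Rightarrow> complex) set" where
  "squeezing_maps \<Omega> x = {\<phi>. p1_holomorphic_on \<phi> \<Omega> \<and> inj_on \<phi> \<Omega> \<and> \<phi> ` \<Omega> \<subseteq> ball 0 1 \<and> \<phi> x = 0}"

definition inner_radius :: "complex set \<Rightarrow> real" where
  "inner_radius A = Sup {r. 0 < r \<and> ball 0 r \<subseteq> A}"

lemma inner_radius_pos_le: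
  assumes "r0 > 0" "ball 0 r0 \<subseteq> A" and le: "\<And>r. 0 < r \<Longrightarrow> ball 0 r \<subseteq> A \<Longrightarrow> r \<le> c"
  shows "0 < inner_radius A \<and> inner_radius A \<le> c"
proof
  have "r0 \<le> inner_radius A"
    unfolding inner_radius_def using assms by (intro cSup_upper bdd_aboveI[of _ c]) auto
  then show "0 < inner_radius A" using assms(1) by linarith
  show "inner_radius A \<le> c"
    unfolding inner_radius_def using assms by (intro cSup_least) auto
qed

lemma squeezing_function_pos_le:
  assumes "squeezing_maps \<Omega> x \<noteq> {}"
    and "\<And>\<phi>. \<phi> \<in> squeezing_maps \<Omega> x \<Longrightarrow> 0 < inner_radius (\<phi> ` \<Omega>) \<and> inner_radius (\<phi> ` \<Omega>) \<le> c"
  shows "0 < squeezing_function \<Omega> x \<and> squeezing_function \<Omega> x \<le> c"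
proof -
  have eq: "squeezing_function \<Omega> x = (SUP \<phi> \<in> squeezing_maps \<Omega> x. inner_radius (\<phi> ` \<Omega>))"
    by (simp add: squeezing_function_def squeezing_maps_def inner_radius_def)
  obtain \<phi> where \<phi>: "\<phi> \<in> squeezing_maps \<Omega> x" using assms(1) by blast
  then have "inner_radius (\<phi> ` \<Omega>) \<le> squeezing_function \<Omega> x"
    unfolding eq using assms(2) by (intro cSUP_upper bdd_aboveI2[of _ _ c]) auto
  moreover have "squeezing_function \<Omega> x \<le> c"
    unfolding eq using assms by (intro cSUP_least) auto
  ultimately show ?thesis using assms(2)[OF \<phi>] by linarith
qed

lemma squeezing_maps_nonempty:
  assumes "p1_holomorphic_on f \<Omega>" "inj_on f \<Omega>" "bounded (f ` \<Omega>)" "x \<in> \<Omega>"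
  shows "squeezing_maps \<Omega> x \<noteq> {}"
proof -
  obtain b where b: "b > 0" "\<And>y. y \<in> \<Omega> \<Longrightarrow> norm (f y) \<le> b"
    using assms(3) by (auto simp: bounded_pos)
  define \<phi> where "\<phi> y = (f y - f x) / of_real (3 * b)" for y
  have "p1_holomorphic_on \<phi> \<Omega>"
    using assms(1) unfolding \<phi>_def p1_holomorphic_on_def by (auto intro!: holomorphic_intros)
  moreover have "inj_on \<phi> \<Omega>"
    using assms(2) b(1) unfolding \<phi>_def inj_on_def by auto
  moreover have "norm (\<phi> y) < 1" if "y \<in> \<Omega>" for y
  proof -
    have "norm (f y - f x) \<le> 2 * b"
      using b(2)[OF that] b(2)[OF assms(4)] norm_triangle_ineq4[of "f y" "f x"] by linarith
    then show ?thesis using b(1) by (simp add: \<phi>_def norm_divide)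
  qed
  ultimately have "\<phi> \<in> squeezing_maps \<Omega> x" by (auto simp: squeezing_maps_def \<phi>_def)
  then show ?thesis by blast
qed

lemma squeezing_function_near_puncture:
  assumes op: "p1_open \<Omega>" and "p \<notin> \<Omega>" and "R > 0" and punct: "chart p ` (ball 0 R - {0}) \<subseteq> \<Omega>"
    and maps: "squeezing_maps \<Omega> (chart p w) \<noteq> {}" and w: "w \<noteq> 0" "norm w < R/2"
  shows "0 < squeezing_function \<Omega> (chart p w) \<and> squeezing_function \<Omega> (chart p w) \<le> 2 / R * norm w"
proof (rule squeezing_function_pos_le[OF maps])
  fix \<phi> assume "\<phi> \<in> squeezing_maps \<Omega> (chart p w)"
  then have hol: "p1_holomorphic_on \<phi> \<Omega>" and inj: "inj_on \<phi> \<Omega>"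
    and img: "\<phi> ` \<Omega> \<subseteq> ball 0 1" and zero: "\<phi> (chart p w) = 0"
    by (auto simp: squeezing_maps_def)
  have "norm w < R" using w(2) norm_ge_zero[of w] by linarith
  then have wR: "w \<in> ball 0 R - {0}" using w(1) by simp
  obtain \<eta> where \<eta>: "\<eta> > 0" "chart (chart p w) ` ball 0 \<eta> \<subseteq> \<Omega>"
    using p1_open_contains_chart_image[OF op] punct wR by blast
  let ?V = "(\<phi> \<circ> chart (chart p w)) ` ball 0 \<eta>"
  have "open ?V" by (rule open_image_chart_comp[OF hol inj \<eta>(2)])
  moreover have "0 \<in> ?V" using zero \<eta>(1) by (auto intro!: image_eqI[of _ _ 0])
  ultimately obtain r0 where "r0 > 0" "ball 0 r0 \<subseteq> ?V" by (rule openE)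
  moreover have "?V \<subseteq> \<phi> ` \<Omega>" using \<eta>(2) by auto
  ultimately have r0: "r0 > 0" "ball 0 r0 \<subseteq> \<phi> ` \<Omega>" by auto
  have "(\<phi> \<circ> chart p) holomorphic_on ball 0 R - {0}"
    using punct by (intro holomorphic_on_chart_comp[OF hol]) auto
  moreover have "norm ((\<phi> \<circ> chart p) u) \<le> 1" if "u \<in> ball 0 R - {0}" for u
  proof -
    have "\<phi> (chart p u) \<in> ball 0 1" using img punct that by blast
    then show ?thesis by simp
  qed
  ultimately obtain G where G: "G holomorphic_on ball 0 R" "\<And>u. u \<in> ball 0 R - {0} \<Longrightarrow> G u = \<phi> (chart p u)"
      "\<And>u. u \<in> ball 0 R \<Longrightarrow> norm (G u) \<le> 1"
    by (rule removable_singularity_norm_le) auto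
  have "isCont G 0"
    using G(1) \<open>R > 0\<close> by (intro continuous_on_interior[OF holomorphic_on_imp_continuous_on]) auto
  then have omitted: "G 0 \<notin> \<phi> ` \<Omega>"
    using extension_value_not_in_image[OF op hol inj \<open>p \<notin> \<Omega>\<close> \<open>R > 0\<close> punct] G(2) by blast
  have "norm (G w - G 0) \<le> 2 * 1 / R * norm (w - 0)"
    using w by (intro holomorphic_bounded_Lipschitz_on_half_ball[OF G(1,3)]) auto
  then have G0: "norm (G 0) \<le> 2 / R * norm w"
    using G(2)[OF wR] zero by simp
  have "r \<le> 2 / R * norm w" if "ball 0 r \<subseteq> \<phi> ` \<Omega>" for r
  proof -
    have "r \<le> norm (G 0)" using that omitted by (meson mem_ball_0 not_le subsetD)
    with G0 show ?thesis by linarith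
  qed
  then show "0 < inner_radius (\<phi> ` \<Omega>) \<and> inner_radius (\<phi> ` \<Omega>) \<le> 2 / R * norm w"
    using inner_radius_pos_le[OF r0] by blast
qed

lemma squeezing_function_tendsto_0_at_puncture:
  assumes "p1_open \<Omega>" "p \<notin> \<Omega>" "R > 0" "chart p ` (ball 0 R - {0}) \<subseteq> \<Omega>"
    and maps: "\<And>x. x \<in> \<Omega> \<Longrightarrow> squeezing_maps \<Omega> x \<noteq> {}"
  shows "((squeezing_function \<Omega>) \<longlongrightarrow> 0) (atin_within p1_top p \<Omega>)"
proof (rule tendstoI)
  fix e :: real assume "e > 0"
  define \<delta> where "\<delta> = min (R/2) (e * R / 2)"
  have "\<delta> > 0" using \<open>e > 0\<close> \<open>R > 0\<close> by (simp add: \<delta>_def)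
  show "\<forall>\<^sub>F x in atin_within p1_top p \<Omega>. dist (squeezing_function \<Omega> x) 0 < e"
    unfolding eventually_atin_within
  proof (intro disjI2 exI conjI ballI impI)
    show "openin p1_top (chart p ` ball 0 \<delta>)"
      using p1_open_chart_image[OF \<open>\<delta> > 0\<close>] by (simp add: openin_p1_top)
    show "p \<in> chart p ` ball 0 \<delta>" using \<open>\<delta> > 0\<close> by (metis chart_0 centre_in_ball image_eqI)
    fix x assume "x \<in> chart p ` ball 0 \<delta>" and x: "x \<in> \<Omega> \<and> x \<noteq> p"
    then obtain u where u: "norm u < \<delta>" "x = chart p u" by auto
    with x have "u \<noteq> 0" by auto
    then have "0 < squeezing_function \<Omega> x \<and> squeezing_function \<Omega> x \<le> 2 / R * norm u"
      unfolding u(2) using assms maps x u by (intro squeezing_function_near_puncture) (auto simp: \<delta>_def)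
    moreover have "2 / R * norm u < e"
      using u \<open>R > 0\<close> by (simp add: \<delta>_def field_simps)
    ultimately show "dist (squeezing_function \<Omega> x) 0 < e" by simp
  qed
qed

theorem lemma3p1:
  fixes K P :: "riemann_sphere set" and \<Omega> :: "riemann_sphere set" and p :: riemann_sphere
  assumes "compactin p1_top K"
    and "\<Omega> = UNIV - K"
    and "connectedin p1_top \<Omega>"
    and "\<exists>f. p1_holomorphic_on f \<Omega> \<and> inj_on f \<Omega> \<and> bounded (f ` \<Omega>)"
    and "finite P" and "P \<subseteq> \<Omega>"
    and "p \<in> P"
  shows "limitin euclideanreal (squeezing_function (\<Omega> - P)) 0 (atin_within p1_top p (\<Omega> - P))"
proof -
  have "p1_open (\<Omega> - (P - {p}))" "p \<in> \<Omega> - (P - {p})"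
    using assms(1,2,5,6,7) by (auto intro: p1_open_Diff_compact_finite)
  then obtain R where "R > 0" and R: "chart p ` ball 0 R \<subseteq> \<Omega> - (P - {p})"
    by (rule p1_open_contains_chart_image)
  have "chart p u \<noteq> p" if "u \<noteq> 0" for u
    using that inj_chart by (metis chart_0 injD)
  then have "chart p ` (ball 0 R - {0}) \<subseteq> \<Omega> - P" using R by auto
  moreover obtain f where "p1_holomorphic_on f \<Omega>" "inj_on f \<Omega>" "bounded (f ` \<Omega>)"
    using assms(4) by blast
  then have "squeezing_maps (\<Omega> - P) x \<noteq> {}" if "x \<in> \<Omega> - P" for x
    using that by (intro squeezing_maps_nonempty)
      (auto intro: p1_holomorphic_on_subset inj_on_subset bounded_subset[OF _ image_mono])
  moreover have "p1_open (\<Omega> - P)"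
    using assms(1,2,5) by (simp add: p1_open_Diff_compact_finite)
  ultimately have "(squeezing_function (\<Omega> - P) \<longlongrightarrow> 0) (atin_within p1_top p (\<Omega> - P))"
    using \<open>R > 0\<close> assms(7) by (intro squeezing_function_tendsto_0_at_puncture) auto
  then show ?thesis by simp
qed

end
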